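(* Let $R$ be a ring, $n$ a positive integer, and $I\subseteq J$ proper ideals of $R$. If $I$ is a weakly $n$-absorbing ideal of $R$ and $J/I$ is a weakly $n$-absorbing ideal of $R/I$, then $J$ is a weakly $n$-absorbing ideal of $R$.
   Context: All rings are commutative with $1\neq0$. A proper ideal $I$ of $R$ is weakly $n$-absorbing if whenever $0\neq a_1\cdots a_{n+1}\in I$ with $a_1,\dots,a_{n+1}\in R$, there are $n$ of the $a_i$'s whose product is in $I$. *)

theory Defs
  imports "HOL-Algebra.Algebra"
begin

definition weakly_n_absorbing ::
  "('a, 'b) ring_scheme \<Rightarrow> nat \<Rightarrow> 'a set \<Rightarrow> bool" where
  "weakly_n_absorbing R n I \<longleftrightarrow>
     ideal I R \<and> I \<noteq> carrier R \<and>
     (\<forall>a :: nat \<Rightarrow> 'a. (\<forall>i\<le>n. a i \<in> carrier R) \<longrightarrow>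
        finprod R a {..n} \<noteq> \<zero>\<^bsub>R\<^esub> \<longrightarrow>
        finprod R a {..n} \<in> I \<longrightarrow>
        (\<exists>j\<le>n. finprod R a ({..n} - {j}) \<in> I))"

definition quot_ideal :: "('a, 'b) ring_scheme \<Rightarrow> 'a set \<Rightarrow> 'a set \<Rightarrow> 'a set set" where
  "quot_ideal R J I = (\<lambda>x. I +>\<^bsub>R\<^esub> x) ` J"

end

theory Submission
  imports Defs
begin

text \<open>If the product \<open>a\<^sub>0 \<cdots> a\<^sub>n\<close> already lies in \<open>I\<close>, some \<open>n\<close> of the factors
  multiply into \<open>I \<subseteq> J\<close>. Otherwise its image in \<open>R/I\<close> is a nonzero product lying in \<open>J/I\<close>;
  since \<open>x \<mapsto> I + x\<close> is a ring homomorphism and \<open>I + x \<in> J/I\<close> exactly when \<open>x \<in> J\<close>,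
  the weak \<open>n\<close>-absorption of \<open>J/I\<close> pulls back to \<open>J\<close>.\<close>

lemma weakly_n_absorbingD:
  assumes "weakly_n_absorbing R n I"
    and "\<And>i. i \<le> n \<Longrightarrow> a i \<in> carrier R"
    and "finprod R a {..n} \<noteq> \<zero>\<^bsub>R\<^esub>" and "finprod R a {..n} \<in> I"
  obtains j where "j \<le> n" and "finprod R a ({..n} - {j}) \<in> I"
  using assms unfolding weakly_n_absorbing_def by blast

lemma weakly_n_absorbingI:
  assumes "ideal I R" and "I \<noteq> carrier R"
    and "\<And>a. \<lbrakk>\<And>i. i \<le> n \<Longrightarrow> a i \<in> carrier R; finprod R a {..n} \<noteq> \<zero>\<^bsub>R\<^esub>;
      finprod R a {..n} \<in> I\<rbrakk> \<Longrightarrow> \<exists>j\<le>n. finprod R a ({..n} - {j}) \<in> I"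
  shows "weakly_n_absorbing R n I"
  using assms unfolding weakly_n_absorbing_def by blast

lemma (in ring) rcos_eq_Quot_zero_iff:
  assumes "ideal I R" and "x \<in> carrier R"
  shows "I +> x = \<zero>\<^bsub>R Quot I\<^esub> \<longleftrightarrow> x \<in> I"
  using ideal.rcos_const_imp_mem[OF assms(1)] a_rcos_zero[OF assms(1)] assms(2)
  by (auto simp: FactRing_def)

lemma (in ring) rcos_mem_quot_ideal_iff:
  assumes "ideal I R" and "ideal J R" and "I \<subseteq> J" and "x \<in> carrier R"
  shows "I +> x \<in> quot_ideal R J I \<longleftrightarrow> x \<in> J"
proof
  assume "I +> x \<in> quot_ideal R J I"
  then obtain y where "y \<in> J" and "I +> x = I +> y"
    unfolding quot_ideal_def by blast
  then have "x \<in> I +> y"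
    using assms(1,4) by (metis ideal.axioms(1) abelian_subgroupI3 is_abelian_group
        abelian_subgroup.a_rcos_self)
  then obtain i where "i \<in> I" and "x = i \<oplus> y"
    unfolding a_r_coset_def r_coset_def by auto
  with \<open>y \<in> J\<close> show "x \<in> J"
    using assms(2,3) by (meson additive_subgroup.a_closed ideal.axioms(1) subsetD)
qed (simp add: quot_ideal_def)

lemma (in cring) rcos_finprod:
  assumes "ideal I R" and "a \<in> A \<rightarrow> carrier R"
  shows "I +> finprod R a A = finprod (R Quot I) (\<lambda>i. I +> a i) A"
proof -
  interpret ring_hom_cring R "R Quot I" "(+>) I"
    using ideal.rcos_ring_hom_cring[OF assms(1)] is_cring by blast
  show ?thesis
    using hom_finprod[OF assms(2)] by (simp add: comp_def)
qed

lemma (in cring) absorbing_of_quot_absorbing: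
  assumes "ideal I R" and "ideal J R" and "I \<subseteq> J"
    and "weakly_n_absorbing (R Quot I) n (quot_ideal R J I)"
    and a_carrier: "\<And>i. i \<le> n \<Longrightarrow> a i \<in> carrier R"
    and "finprod R a {..n} \<notin> I" and "finprod R a {..n} \<in> J"
  obtains j where "j \<le> n" and "finprod R a ({..n} - {j}) \<in> J"
proof -
  let ?b = "\<lambda>i. I +> a i"
  have image_prod: "finprod (R Quot I) ?b B = I +> finprod R a B"
    and prod_closed: "finprod R a B \<in> carrier R" if "B \<subseteq> {..n}" for B
  proof -
    have a_Pi: "a \<in> B \<rightarrow> carrier R"
      using a_carrier that by auto
    show "finprod (R Quot I) ?b B = I +> finprod R a B"
      using rcos_finprod[OF assms(1) a_Pi] by (rule sym)
    show "finprod R a B \<in> carrier R"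
      using a_Pi by (rule finprod_closed)
  qed
  have b_carrier: "?b i \<in> carrier (R Quot I)" if "i \<le> n" for i
    using ring_hom_closed[OF ideal.rcos_ring_hom[OF assms(1)] a_carrier[OF that]] .
  have quot_nonzero: "finprod (R Quot I) ?b {..n} \<noteq> \<zero>\<^bsub>R Quot I\<^esub>"
    unfolding image_prod[OF order_refl]
      rcos_eq_Quot_zero_iff[OF assms(1) prod_closed[OF order_refl]]
    by fact
  have quot_mem: "finprod (R Quot I) ?b {..n} \<in> quot_ideal R J I"
    unfolding image_prod[OF order_refl]
      rcos_mem_quot_ideal_iff[OF assms(1-3) prod_closed[OF order_refl]]
    by fact
  obtain j where "j \<le> n"
    and quot_absorbed: "finprod (R Quot I) ?b ({..n} - {j}) \<in> quot_ideal R J I"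
    by (rule weakly_n_absorbingD[OF assms(4) b_carrier quot_nonzero quot_mem])
  have "finprod R a ({..n} - {j}) \<in> J"
    using quot_absorbed unfolding image_prod[OF Diff_subset[of "{..n}" "{j}"]]
      rcos_mem_quot_ideal_iff[OF assms(1-3) prod_closed[OF Diff_subset[of "{..n}" "{j}"]]] .
  with \<open>j \<le> n\<close> show ?thesis
    by (rule that)
qed

theorem mainTheorem14:
  fixes R :: "('a, 'b) ring_scheme" and n :: nat and I J :: "'a set"
  assumes "cring R" and "\<one>\<^bsub>R\<^esub> \<noteq> \<zero>\<^bsub>R\<^esub>"
    and "n \<ge> 1"
    and "ideal I R" and "ideal J R" and "I \<subseteq> J"
    and "I \<noteq> carrier R" and "J \<noteq> carrier R"
    and "weakly_n_absorbing R n I"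
    and "weakly_n_absorbing (R Quot I) n (quot_ideal R J I)"
  shows "weakly_n_absorbing R n J"
proof (rule weakly_n_absorbingI[OF assms(5,8)])
  interpret cring R by fact
  fix a :: "nat \<Rightarrow> 'a"
  assume a_carrier: "\<And>i. i \<le> n \<Longrightarrow> a i \<in> carrier R"
    and nonzero: "finprod R a {..n} \<noteq> \<zero>\<^bsub>R\<^esub>" and "finprod R a {..n} \<in> J"
  show "\<exists>j\<le>n. finprod R a ({..n} - {j}) \<in> J"
  proof (cases "finprod R a {..n} \<in> I")
    case True
    obtain j where "j \<le> n" and "finprod R a ({..n} - {j}) \<in> I"
      by (rule weakly_n_absorbingD[OF assms(9) a_carrier nonzero True])
    with assms(6) show ?thesis
      by blast
  next
    case False
    obtain j where "j \<le> n" and "finprod R a ({..n} - {j}) \<in> J"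
      by (rule absorbing_of_quot_absorbing[OF assms(4-6,10) a_carrier False
            \<open>finprod R a {..n} \<in> J\<close>])
    then show ?thesis
      by blast
  qed
qed

end
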